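(* Let $n>1$, $\ell_0\ge2$, $\ell\in\mathbb N$ with $\ell\ge\ell_0$, $\mathbf k\in(\mathbb Z/(2^\ell\mathbb Z))^n$, $\mathbf e\in\{0,1\}^n$, $\mathbf q\in\mathbb Z^n$, and let $\psi^{\rm iso}_{\ell,\mathbf k,\mathbf e}$, $\xi_{\mathbf q}$ be as in the context. Let $\mathrm{zero}(\mathbf x)=[n]\setminus\mathrm{supp}(\mathbf x)$. Then: (a) If $\mathbf q=\mathbf 0$: $(\nabla\psi^{\rm iso}_{\ell,\mathbf k,\mathbf e},\nabla\xi_{\mathbf 0})=0$; $(\boldsymbol\beta\cdot\nabla\psi^{\rm iso}_{\ell,\mathbf k,\mathbf e},\xi_{\mathbf 0})=0$ for all $\boldsymbol\beta\in\mathbb R^n$; $|(\psi^{\rm iso}_{\ell,\mathbf k,\mathbf e},\xi_{\mathbf 0})|=2^{-n\ell/2}$ if $\mathbf e=\mathbf 0$ and $=0$ if $\mathbf e\ne\mathbf 0$. (b) If $\mathbf q\ne\mathbf 0$ and $\mathrm{zero}(\mathbf q)\subseteq\mathrm{zero}(\mathbf e)$, then for every $\boldsymbol\gamma\in[0,2]^{\|\mathbf q\|_0}$, $$|(\nabla\psi^{\rm iso}_{\ell,\mathbf k,\mathbf e},\nabla\xi_{\mathbf q})|\lesssim2^{(-\frac n2+2\|\mathbf q\|_0-\|\widehat{\boldsymbol\gamma}\|_1)\ell}|\widehat{\mathbf q}|^{\widehat{\boldsymbol\gamma}-\mathbf 2}\|\mathbf q\|_2^2,$$ $$|(\boldsymbol\beta\cdot\nabla\psi^{\rm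 iso}_{\ell,\mathbf k,\mathbf e},\xi_{\mathbf q})|\lesssim2^{(-\frac n2+2\|\mathbf q\|_0-\|\widehat{\boldsymbol\gamma}\|_1)\ell}|\widehat{\mathbf q}|^{\widehat{\boldsymbol\gamma}-\mathbf 2}\|\boldsymbol\beta\|_2\|\mathbf q\|_2\quad\forall\boldsymbol\beta\in\mathbb R^n,$$ $$|(\psi^{\rm iso}_{\ell,\mathbf k,\mathbf e},\xi_{\mathbf q})|\lesssim2^{(-\frac n2+2\|\mathbf q\|_0-\|\widehat{\boldsymbol\gamma}\|_1)\ell}|\widehat{\mathbf q}|^{\widehat{\boldsymbol\gamma}-\mathbf 2},$$ with hidden constants depending exponentially on $n$ only. (c) If $\mathbf q\ne\mathbf 0$ and $\mathrm{zero}(\mathbf q)\not\subseteq\mathrm{zero}(\mathbf e)$: $(\nabla\psi^{\rm iso}_{\ell,\mathbf k,\mathbf e},\nabla\xi_{\mathbf q})=0$, $(\boldsymbol\beta\cdot\nabla\psi^{\rm iso}_{\ell,\mathbf k,\mathbf e},\xi_{\mathbf q})=0$ for all $\boldsymbol\beta\in\mathbb R^n$, and $(\psi^{\rm iso}_{\ell,\mathbf k,\mathbf e},\xi_{\mathbf q})=0$.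
   Context: $\mathcal D=(0,1)^n$, $(u,v)=\int_{\mathcal D}u\bar v$. 1D functions: $\varphi(x)=\max\{0,1-|x|\}$, $\psi(x)=\sum_{j=-1}^3b_j\varphi(2x-j)$ with $(b_{-1},\dots,b_3)=(\tfrac14,\tfrac12,-\tfrac32,\tfrac12,\tfrac14)$ (biorthogonal B-spline wavelets of order $(2,2)$), $\varphi_{\ell,k}=2^{\ell/2}\varphi(2^\ell\cdot-k)$, $\psi_{\ell,k}=2^{\ell/2}\psi(2^\ell\cdot-k)$, 1-periodized ($f^{\rm per}(x)=\sum_{j\in\mathbb Z}f(x+j)$) on $(0,1)$. Set $\vartheta_{\ell,k,0}=\varphi_{\ell,k}$, $\vartheta_{\ell,k,1}=\psi_{\ell,k}$, and $\psi^{\rm iso}_{\ell,\mathbf k,\mathbf e}(\mathbf x)=\prod_{j=1}^n\vartheta_{\ell,k_j,e_j}(x_j)$. $\xi_{\mathbf q}(\mathbf x)=e^{2\pi i\mathbf q\cdot\mathbf x}$. Notation: $\mathrm{supp}(\mathbf x)=\{j:x_j\ne0\}$, $\|\mathbf q\|_0=|\mathrm{supp}(\mathbf q)|$, $\widehat{\mathbf x}=\mathbf x|_{\mathrm{supp}(\mathbf q)}$ (and $\widehat{\boldsymbol\gamma}$ is $\boldsymbol\gamma$ indexed by $\mathrm{supp}(\mathbf q)$), $|\mathbf x|^{\mathbf y}=\prod_j|x_j|^{y_j}$, $\mathbf 2=(2,\dots,2)$, $[n]=\{1,\dots,n\}$. *)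

theory Defs
  imports "HOL-Analysis.Analysis" "HOL-Probability.Probability"
begin

text \<open>Points of (0,1)^n are represented as functions nat => real, coordinates j < n.\<close>

definition hat :: "real \<Rightarrow> real" where
  "hat x = max 0 (1 - \<bar>x\<bar>)"

definition bcoef :: "int \<Rightarrow> real" where
  "bcoef j = (if j = -1 then 1/4 else if j = 0 then 1/2 else if j = 1 then -3/2
              else if j = 2 then 1/2 else if j = 3 then 1/4 else 0)"

definition wav :: "real \<Rightarrow> real" where
  "wav x = (\<Sum>j\<in>{-1..3::int}. bcoef j * hat (2 * x - of_int j))"

definition periodize :: "(real \<Rightarrow> real) \<Rightarrow> real \<Rightarrow> real" where
  "periodize f x = (\<Sum>\<^sub>\<infinity> j::int. f (x + of_int j))"

text \<open>theta l k 0 = periodized phi_{l,k};  theta l k 1 = periodized psi_{l,k}\<close>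
definition theta :: "nat \<Rightarrow> int \<Rightarrow> nat \<Rightarrow> real \<Rightarrow> real" where
  "theta l k e = periodize (\<lambda>x. 2 powr (real l / 2) *
      (if e = 0 then hat else wav) (2 ^ l * x - of_int k))"

definition psi_iso :: "nat \<Rightarrow> nat \<Rightarrow> (nat \<Rightarrow> int) \<Rightarrow> (nat \<Rightarrow> nat) \<Rightarrow> (nat \<Rightarrow> real) \<Rightarrow> real" where
  "psi_iso n l k e x = (\<Prod>j<n. theta l (k j) (e j) (x j))"

definition xi :: "nat \<Rightarrow> (nat \<Rightarrow> int) \<Rightarrow> (nat \<Rightarrow> real) \<Rightarrow> complex" where
  "xi n q x = exp (2 * pi * \<i> * complex_of_real (\<Sum>j<n. real_of_int (q j) * x j))"

text \<open>Classical partial derivative in direction j where it exists, 0 elsewhere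
  (agrees a.e. with the weak derivative for the functions considered).\<close>
definition pd :: "nat \<Rightarrow> ((nat \<Rightarrow> real) \<Rightarrow> complex) \<Rightarrow> (nat \<Rightarrow> real) \<Rightarrow> complex" where
  "pd j u x = (if (\<exists>D. ((\<lambda>t. u (x(j := t))) has_vector_derivative D) (at (x j)))
               then vector_derivative (\<lambda>t. u (x(j := t))) (at (x j)) else 0)"

definition cube_measure :: "nat \<Rightarrow> (nat \<Rightarrow> real) measure" where
  "cube_measure n = PiM {..<n} (\<lambda>_. lborel)"

definition cube :: "nat \<Rightarrow> (nat \<Rightarrow> real) set" where
  "cube n = PiE {..<n} (\<lambda>_. {0<..<1})"

definition ip :: "nat \<Rightarrow> ((nat \<Rightarrow> real) \<Rightarrow> complex) \<Rightarrow> ((nat \<Rightarrow> real) \<Rightarrow> complex) \<Rightarrow> complex" where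
  "ip n u v = (LINT x:cube n|cube_measure n. u x * cnj (v x))"

definition gip :: "nat \<Rightarrow> ((nat \<Rightarrow> real) \<Rightarrow> complex) \<Rightarrow> ((nat \<Rightarrow> real) \<Rightarrow> complex) \<Rightarrow> complex" where
  "gip n u v = (LINT x:cube n|cube_measure n. (\<Sum>j<n. pd j u x * cnj (pd j v x)))"

definition dirder :: "nat \<Rightarrow> (nat \<Rightarrow> real) \<Rightarrow> ((nat \<Rightarrow> real) \<Rightarrow> complex) \<Rightarrow> (nat \<Rightarrow> real) \<Rightarrow> complex" where
  "dirder n \<beta> u x = (\<Sum>j<n. complex_of_real (\<beta> j) * pd j u x)"

definition supp_v :: "nat \<Rightarrow> (nat \<Rightarrow> 'a::zero) \<Rightarrow> nat set" where
  "supp_v n x = {j. j < n \<and> x j \<noteq> 0}"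

definition zero_v :: "nat \<Rightarrow> (nat \<Rightarrow> 'a::zero) \<Rightarrow> nat set" where
  "zero_v n x = {..<n} - supp_v n x"

definition PSI :: "nat \<Rightarrow> nat \<Rightarrow> (nat \<Rightarrow> int) \<Rightarrow> (nat \<Rightarrow> nat) \<Rightarrow> (nat \<Rightarrow> real) \<Rightarrow> complex" where
  "PSI n l k e x = complex_of_real (psi_iso n l k e x)"

definition bnd :: "nat \<Rightarrow> nat \<Rightarrow> (nat \<Rightarrow> int) \<Rightarrow> (nat \<Rightarrow> real) \<Rightarrow> real" where
  "bnd n l q \<gamma> = 2 powr ((- real n / 2 + 2 * real (card (supp_v n q))
       - (\<Sum>j\<in>supp_v n q. \<gamma> j)) * real l)
     * (\<Prod>j\<in>supp_v n q. \<bar>real_of_int (q j)\<bar> powr (\<gamma> j - 2))"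

end

(*
  Both PSI and xi q are tensor products over the coordinates, so by Fubini every inner
  product factorizes: (PSI, xi q) is the product of the Fourier coefficients c_j of the
  one-dimensional factors theta_j at frequency q_j.  Each theta_j is continuous, 1-periodic
  and piecewise C^1, so integration by parts turns the coefficient of theta_j' into
  2 pi i q_j c_j; hence (grad PSI, grad xi q) = 4 pi^2 |q|^2 prod c_j and
  (beta . grad PSI, xi q) = 2 pi i (beta . q) prod c_j.

  For 0 <= k < 2^l the unperiodized factor 2^(l/2) g (2^l s - k), with g the hat or the
  wavelet, is supported in (-1, 2), so c_j is its Fourier transform at 2 pi q_j.  All
  transforms are written with the kernel exp (c t), c complex, and reduce by affine changes
  of variables to the explicit transform of the hat function.  This gives
  |c_j| <= 2^(-l/2) 3/2 and |c_j| <= 24 2^(-l/2) (2^l / (2 pi q_j))^2, and interpolating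
  |c_j| <= 2 2^(-l/2) (2^l / |q_j|)^(2 - gamma_j), whose product over j is 2^n bnd.  At q_j = 0
  the coefficient is 2^(-l/2) for the hat and 0 for the wavelet, whose coefficients b_j sum
  to 0; this gives the exact values in the cases q = 0 and zero(q) not contained in zero(e).
*)

theory Submission
  imports Defs
begin

section \<open>The hat function and piecewise differentiable functions\<close>

definition hat_deriv :: "real \<Rightarrow> real" where
  "hat_deriv x = (if -1 < x \<and> x < 0 then 1 else if 0 < x \<and> x < 1 then -1 else 0)"

lemma hat_nonneg: "0 \<le> hat x"
  by (simp add: hat_def)

lemma hat_eq_0: "1 \<le> \<bar>x\<bar> \<Longrightarrow> hat x = 0"
  by (simp add: hat_def)

lemma hat_left: "x \<le> 0 \<Longrightarrow> -1 \<le> x \<Longrightarrow> hat x = 1 + x"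
  by (simp add: hat_def)

lemma hat_right: "0 \<le> x \<Longrightarrow> x \<le> 1 \<Longrightarrow> hat x = 1 - x"
  by (simp add: hat_def)

lemma continuous_on_hat: "continuous_on S hat"
  unfolding hat_def by (intro continuous_intros)

lemma borel_measurable_hat_deriv [measurable]: "hat_deriv \<in> borel_measurable borel"
  unfolding hat_deriv_def by measurable

lemma has_real_derivative_hat:
  assumes "x \<notin> {-1, 0, 1}"
  shows "(hat has_real_derivative hat_deriv x) (at x)"
proof -
  have piece: "(hat has_real_derivative hat_deriv x) (at x)"
    if "x \<in> S" "open S" "\<forall>y\<in>S. hat y = u y" "(u has_real_derivative hat_deriv x) (at x)" for S u
    using that by (metis has_field_derivative_transform_within_open)
  consider "x < -1" | "-1 < x" "x < 0" | "0 < x" "x < 1" | "1 < x"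
    using assms by force
  then show ?thesis
  proof cases
    case 1
    show ?thesis by (rule piece[of "{..< -1}" "\<lambda>_. 0"]) (use 1 in \<open>auto simp: hat_def hat_deriv_def\<close>)
  next
    case 2
    show ?thesis
      by (rule piece[of "{-1<..<0}" "\<lambda>y. 1 + y"])
         (use 2 in \<open>auto simp: hat_def hat_deriv_def intro!: derivative_eq_intros\<close>)
  next
    case 3
    show ?thesis
      by (rule piece[of "{0<..<1}" "\<lambda>y. 1 - y"])
         (use 3 in \<open>auto simp: hat_def hat_deriv_def intro!: derivative_eq_intros\<close>)
  next
    case 4
    show ?thesis by (rule piece[of "{1<..}" "\<lambda>_. 0"]) (use 4 in \<open>auto simp: hat_def hat_deriv_def\<close>)
  qed
qed

definition piecewise_deriv :: "(real \<Rightarrow> real) \<Rightarrow> (real \<Rightarrow> real) \<Rightarrow> real set \<Rightarrow> bool" where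
  "piecewise_deriv f f' K \<longleftrightarrow> finite K \<and> continuous_on UNIV f \<and>
     (\<forall>x. x \<notin> K \<longrightarrow> (f has_real_derivative f' x) (at x)) \<and>
     f' \<in> borel_measurable borel \<and> (\<exists>B. \<forall>x. \<bar>f' x\<bar> \<le> B)"

lemma piecewise_deriv_hat: "piecewise_deriv hat hat_deriv {-1, 0, 1}"
proof -
  have "\<bar>hat_deriv x\<bar> \<le> 1" for x
    by (simp add: hat_deriv_def)
  then show ?thesis
    unfolding piecewise_deriv_def
    using continuous_on_hat has_real_derivative_hat borel_measurable_hat_deriv by blast
qed

lemma piecewise_deriv_affine:
  assumes a: "a \<noteq> 0" and f: "piecewise_deriv f f' K"
  shows "piecewise_deriv (\<lambda>x. f (a * x + b)) (\<lambda>x. a * f' (a * x + b)) ((\<lambda>y. (y - b) / a) ` K)"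
proof -
  from f obtain B where B: "\<And>y. \<bar>f' y\<bar> \<le> B" and [measurable]: "f' \<in> borel_measurable borel"
    unfolding piecewise_deriv_def by blast
  have "\<bar>a * f' (a * x + b)\<bar> \<le> \<bar>a\<bar> * B" for x
    by (simp add: abs_mult B mult_left_mono)
  moreover have "((\<lambda>x. f (a * x + b)) has_real_derivative a * f' (a * x + b)) (at x)"
    if x: "x \<notin> (\<lambda>y. (y - b) / a) ` K" for x
  proof -
    have "a * x + b \<notin> K"
    proof
      assume "a * x + b \<in> K"
      then have "(a * x + b - b) / a \<in> (\<lambda>y. (y - b) / a) ` K"
        by (rule imageI)
      with x a show False
        by simp
    qed
    then have "(f has_real_derivative f' (a * x + b)) (at (a * x + b))"
      using f unfolding piecewise_deriv_def by blast
    moreover have "((\<lambda>x. a * x + b) has_real_derivative a) (at x)"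
      by (auto intro!: derivative_eq_intros)
    ultimately have "((\<lambda>x. f (a * x + b)) has_real_derivative f' (a * x + b) * a) (at x)"
      by (rule DERIV_chain2)
    then show ?thesis
      by (simp only: mult.commute)
  qed
  moreover have "continuous_on UNIV (\<lambda>x. f (a * x + b))"
    using f unfolding piecewise_deriv_def
    by (auto intro!: continuous_on_compose2[of UNIV f] continuous_intros)
  ultimately show ?thesis
    using f unfolding piecewise_deriv_def by (auto intro!: exI[of _ "\<bar>a\<bar> * B"])
qed

lemma piecewise_deriv_add:
  assumes "piecewise_deriv f f' K" "piecewise_deriv g g' L"
  shows "piecewise_deriv (\<lambda>x. f x + g x) (\<lambda>x. f' x + g' x) (K \<union> L)"
proof -
  from assms obtain B C where "\<And>x. \<bar>f' x\<bar> \<le> B" "\<And>x. \<bar>g' x\<bar> \<le> C"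
    unfolding piecewise_deriv_def by blast
  then have "\<bar>f' x + g' x\<bar> \<le> B + C" for x
    by (meson abs_triangle_ineq add_mono order_trans)
  with assms show ?thesis
    unfolding piecewise_deriv_def by (auto intro!: continuous_intros derivative_eq_intros)
qed

lemma piecewise_deriv_cmult:
  assumes "piecewise_deriv f f' K"
  shows "piecewise_deriv (\<lambda>x. c * f x) (\<lambda>x. c * f' x) K"
proof -
  from assms obtain B where "\<And>x. \<bar>f' x\<bar> \<le> B"
    unfolding piecewise_deriv_def by blast
  then have "\<bar>c * f' x\<bar> \<le> \<bar>c\<bar> * B" for x
    by (simp add: abs_mult mult_left_mono)
  with assms show ?thesis
    unfolding piecewise_deriv_def by (auto intro!: continuous_intros derivative_eq_intros)
qed

lemma piecewise_deriv_sum: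
  assumes "finite I" "\<And>i. i \<in> I \<Longrightarrow> piecewise_deriv (f i) (f' i) (K i)"
  shows "piecewise_deriv (\<lambda>x. \<Sum>i\<in>I. f i x) (\<lambda>x. \<Sum>i\<in>I. f' i x) (\<Union>i\<in>I. K i)"
  using assms
proof (induction I rule: finite_induct)
  case empty
  show ?case
    by (auto simp: piecewise_deriv_def intro!: exI[of _ 0])
next
  case (insert i I)
  then show ?case
    using piecewise_deriv_add[of "f i" "f' i" "K i"] by simp
qed

lemma piecewise_deriv_wav: "\<exists>w' K. piecewise_deriv wav w' K"
proof -
  have "piecewise_deriv (\<lambda>x. \<Sum>j\<in>{-1..3::int}. bcoef j * hat (2 * x + - of_int j))
          (\<lambda>x. \<Sum>j\<in>{-1..3::int}. bcoef j * (2 * hat_deriv (2 * x + - of_int j)))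
          (\<Union>j\<in>{-1..3::int}. (\<lambda>y. (y - - of_int j) / 2) ` {-1, 0, 1})"
    by (intro piecewise_deriv_sum piecewise_deriv_cmult piecewise_deriv_affine piecewise_deriv_hat) auto
  moreover have "(\<lambda>x. \<Sum>j\<in>{-1..3::int}. bcoef j * hat (2 * x + - of_int j)) = wav"
    by (simp add: wav_def fun_eq_iff)
  ultimately show ?thesis
    by metis
qed

section \<open>Laplace transforms of the generators\<close>

lemma has_integral_hat_times:
  fixes g :: "real \<Rightarrow> 'a::banach"
  assumes "((\<lambda>t. (1 + t) *\<^sub>R g t) has_integral I) {-1..0}"
    and "((\<lambda>t. (1 - t) *\<^sub>R g t) has_integral J) {0..1}"
  shows "((\<lambda>t. hat t *\<^sub>R g t) has_integral I + J) {-1..1}"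
proof -
  have "((\<lambda>t. hat t *\<^sub>R g t) has_integral I) {-1..0}"
    using assms(1) by (rule has_integral_eq[rotated]) (simp add: hat_left)
  moreover have "((\<lambda>t. hat t *\<^sub>R g t) has_integral J) {0..1}"
    using assms(2) by (rule has_integral_eq[rotated]) (simp add: hat_right)
  ultimately show ?thesis
    by (rule has_integral_combine[rotated 2]) auto
qed

lemma has_integral_hat: "(hat has_integral 1) {-1..1}"
proof -
  have "((\<lambda>t. 1 + t) has_integral (1 + 0)\<^sup>2 / 2 - (1 + -1)\<^sup>2 / 2) {-1..0::real}"
    by (rule fundamental_theorem_of_calculus)
       (auto intro!: derivative_eq_intros simp: has_real_derivative_iff_has_vector_derivative[symmetric])
  moreover have "((\<lambda>t. 1 - t) has_integral - (1 - 1)\<^sup>2 / 2 - - (1 - 0)\<^sup>2 / 2) {0..1::real}"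
    by (rule fundamental_theorem_of_calculus)
       (auto intro!: derivative_eq_intros simp: has_real_derivative_iff_has_vector_derivative[symmetric]
         field_simps)
  ultimately show ?thesis
    using has_integral_hat_times[of "\<lambda>_. 1 :: real" "1 / 2" "1 / 2"] by simp
qed

lemma has_integral_affine_times_exp:
  fixes A B c :: complex
  assumes "c \<noteq> 0" and "\<alpha> \<le> \<beta>"
  shows "((\<lambda>s. (A + B * of_real s) * exp (c * of_real s)) has_integral
           exp (c * of_real \<beta>) * ((A + B * of_real \<beta>) / c - B / c\<^sup>2)
         - exp (c * of_real \<alpha>) * ((A + B * of_real \<alpha>) / c - B / c\<^sup>2)) {\<alpha>..\<beta>}"
proof (rule fundamental_theorem_of_calculus[OF assms(2)])
  fix s
  have "((\<lambda>z. exp (c * z) * ((A + B * z) / c - B / c\<^sup>2)) has_field_derivative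
          (A + B * of_real s) * exp (c * of_real s)) (at (of_real s))"
    using assms(1) by (auto intro!: derivative_eq_intros simp: field_simps power2_eq_square)
  then show "((\<lambda>s. exp (c * of_real s) * ((A + B * of_real s) / c - B / c\<^sup>2)) has_vector_derivative
          (A + B * of_real s) * exp (c * of_real s)) (at s within {\<alpha>..\<beta>})"
    by (rule has_vector_derivative_real_field)
qed

(* At c = - i w this is the Fourier transform (2 - 2 cos w) / w^2 of the hat function. *)
definition hat_laplace :: "complex \<Rightarrow> complex" where
  "hat_laplace c = (if c = 0 then 1 else (exp c + exp (- c) - 2) / c\<^sup>2)"

lemma has_integral_hat_laplace:
  "((\<lambda>t. hat t *\<^sub>R exp (c * of_real t)) has_integral hat_laplace c) {-1..1}"
proof (cases "c = 0")
  case True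
  then show ?thesis
    using has_integral_hat has_integral_scaleR_left[of hat 1 "{-1..1}" 1] by (simp add: hat_laplace_def)
next
  case False
  have "((\<lambda>t. (1 + t) *\<^sub>R exp (c * of_real t)) has_integral
          (1 / c - 1 / c\<^sup>2) - exp (- c) * (- 1 / c\<^sup>2)) {-1..0}"
    using has_integral_affine_times_exp[OF False, of "-1" 0 1 1]
    by (simp add: scaleR_conv_of_real)
  moreover have "((\<lambda>t. (1 - t) *\<^sub>R exp (c * of_real t)) has_integral
          exp c * (1 / c\<^sup>2) - (1 / c + 1 / c\<^sup>2)) {0..1}"
    using has_integral_affine_times_exp[OF False, of 0 1 1 "-1"]
    by (simp add: scaleR_conv_of_real)
  ultimately have "((\<lambda>t. hat t *\<^sub>R exp (c * of_real t)) has_integral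
          (1 / c - 1 / c\<^sup>2) - exp (- c) * (- 1 / c\<^sup>2) + (exp c * (1 / c\<^sup>2) - (1 / c + 1 / c\<^sup>2))) {-1..1}"
    by (rule has_integral_hat_times)
  moreover have "(1 / c - 1 / c\<^sup>2) - exp (- c) * (- 1 / c\<^sup>2) + (exp c * (1 / c\<^sup>2) - (1 / c + 1 / c\<^sup>2))
      = hat_laplace c"
    using False by (simp add: hat_laplace_def field_simps)
  ultimately show ?thesis
    by simp
qed

lemma norm_hat_laplace_le_1:
  assumes "Re c = 0"
  shows "norm (hat_laplace c) \<le> 1"
proof -
  have "norm (hat t *\<^sub>R exp (c * of_real t)) \<le> hat t \<bullet> 1" for t
    using assms by (simp add: hat_nonneg norm_exp_eq_Re)
  then show ?thesis
    using has_integral_norm_bound_integral_component[OF has_integral_hat_laplace[of c] has_integral_hat]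
    by simp
qed

lemma norm_hat_laplace_le:
  assumes "Re c = 0" and "c \<noteq> 0"
  shows "norm (hat_laplace c) \<le> 4 / (norm c)\<^sup>2"
proof -
  have "norm (exp c + exp (- c) - 2) \<le> norm (exp c + exp (- c)) + norm (2 :: complex)"
    by (rule norm_triangle_ineq4)
  also have "\<dots> = norm (exp c + exp (- c)) + 2"
    by simp
  also have "\<dots> \<le> norm (exp c) + norm (exp (- c)) + 2"
    by (rule add_right_mono[OF norm_triangle_ineq])
  also have "\<dots> = 4"
    using assms(1) by (simp add: norm_exp_eq_Re)
  finally show ?thesis
    using assms(2) by (simp add: hat_laplace_def norm_divide norm_power divide_right_mono)
qed

lemma has_integral_laplace_affine:
  fixes f :: "real \<Rightarrow> real" and c :: complex
  assumes f: "((\<lambda>t. f t *\<^sub>R exp (c / of_real a * of_real t)) has_integral V) {\<alpha>..\<beta>}" and a: "0 < a"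
  shows "((\<lambda>s. f (a * s - d) *\<^sub>R exp (c * of_real s)) has_integral
           exp (c * of_real (d / a)) * V / of_real a) {(\<alpha> + d) / a..(\<beta> + d) / a}"
proof -
  have "((\<lambda>s. f (a * s - d) *\<^sub>R exp (c / of_real a * of_real (a * s - d))) has_integral V /\<^sub>R a)
          {(\<alpha> + d) / a..(\<beta> + d) / a}"
    using has_integral_affinity'[OF f[unfolded cbox_interval[symmetric]] a, of "- d"]
    by (simp add: cbox_interval divide_inverse_commute)
  then have "((\<lambda>s. exp (c * of_real (d / a)) * (f (a * s - d) *\<^sub>R exp (c / of_real a * of_real (a * s - d))))
               has_integral exp (c * of_real (d / a)) * (V /\<^sub>R a)) {(\<alpha> + d) / a..(\<beta> + d) / a}"
    by (rule has_integral_mult_right)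
  moreover have "exp (c * of_real (d / a)) * exp (c / of_real a * of_real (a * s - d)) = exp (c * of_real s)" for s
    using a by (simp add: exp_add[symmetric] field_simps)
  ultimately show ?thesis
    by (simp add: scaleR_conv_of_real divide_inverse_commute mult.left_commute)
qed

definition generator :: "nat \<Rightarrow> real \<Rightarrow> real" where
  "generator e = (if e = 0 then hat else wav)"

definition generator_laplace :: "nat \<Rightarrow> complex \<Rightarrow> complex" where
  "generator_laplace e c = (if e = 0 then hat_laplace c
     else (\<Sum>j\<in>{-1..3::int}. of_real (bcoef j) * exp (c * of_int j / 2)) * hat_laplace (c / 2) / 2)"

lemma bcoef_index_set: "{-1..3::int} = {-1, 0, 1, 2, 3}"
  by auto

lemma sum_bcoef: "(\<Sum>j\<in>{-1..3::int}. bcoef j) = 0"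
  by (simp add: bcoef_index_set bcoef_def)

lemma sum_abs_bcoef: "(\<Sum>j\<in>{-1..3::int}. \<bar>bcoef j\<bar>) = 3"
  by (simp add: bcoef_index_set bcoef_def)

lemma generator_eq_0:
  assumes "y \<notin> {-1<..<2}"
  shows "generator e y = 0"
proof -
  have "hat (2 * y - of_int j) = 0" if "j \<in> {-1..3}" for j
    using assms that by (intro hat_eq_0) auto
  moreover have "hat y = 0"
    using assms by (intro hat_eq_0) auto
  ultimately show ?thesis
    by (simp add: generator_def wav_def)
qed

lemma has_integral_generator_laplace:
  "((\<lambda>t. generator e t *\<^sub>R exp (c * of_real t)) has_integral generator_laplace e c) {-1..2}"
proof (cases "e = 0")
  case True
  have "((\<lambda>t. hat t *\<^sub>R exp (c * of_real t)) has_integral hat_laplace c) {-1..2}"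
    using has_integral_hat_laplace[of c] by (rule has_integral_on_superset) (auto simp: hat_eq_0)
  then show ?thesis
    by (simp add: True generator_def generator_laplace_def)
next
  case False
  have "((\<lambda>t. hat (2 * t - of_int j) *\<^sub>R exp (c * of_real t)) has_integral
          exp (c * of_int j / 2) * hat_laplace (c / 2) / 2) {-1..2}" if "j \<in> {-1..3}" for j
  proof (rule has_integral_on_superset)
    show "((\<lambda>t. hat (2 * t - of_int j) *\<^sub>R exp (c * of_real t)) has_integral
          exp (c * of_int j / 2) * hat_laplace (c / 2) / 2) {(-1 + of_int j) / 2..(1 + of_int j) / 2}"
      using has_integral_laplace_affine[of hat "c" 2 "hat_laplace (c / 2)" "-1" 1 "of_int j"]
        has_integral_hat_laplace[of "c / 2"]
      by (simp add: mult.commute)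
    show "{(-1 + of_int j) / 2..(1 + of_int j) / 2} \<subseteq> {-1..2::real}"
      using that by auto
  qed (auto intro!: hat_eq_0 simp: field_simps)
  then have "((\<lambda>t. \<Sum>j\<in>{-1..3::int}. bcoef j *\<^sub>R (hat (2 * t - of_int j) *\<^sub>R exp (c * of_real t))) has_integral
          (\<Sum>j\<in>{-1..3::int}. bcoef j *\<^sub>R (exp (c * of_int j / 2) * hat_laplace (c / 2) / 2))) {-1..2}"
    by (intro has_integral_sum has_integral_cmul) auto
  then show ?thesis
    using False
    by (simp add: generator_def generator_laplace_def wav_def scaleR_sum_left sum_divide_distrib
        sum_distrib_right scaleR_conv_of_real mult.assoc)
qed

lemma generator_laplace_0: "generator_laplace e 0 = (if e = 0 then 1 else 0)"
  using sum_bcoef by (simp add: generator_laplace_def hat_laplace_def flip: of_real_sum)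

lemma norm_bcoef_exp_sum_le:
  assumes "Re c = 0"
  shows "norm (\<Sum>j\<in>{-1..3::int}. of_real (bcoef j) * exp (c * of_int j / 2)) \<le> 3"
proof -
  have "norm (\<Sum>j\<in>{-1..3::int}. of_real (bcoef j) * exp (c * of_int j / 2)) \<le> (\<Sum>j\<in>{-1..3::int}. \<bar>bcoef j\<bar>)"
    using assms by (intro sum_norm_le) (simp add: norm_mult norm_exp_eq_Re)
  then show ?thesis
    using sum_abs_bcoef by simp
qed

lemma norm_generator_laplace_le:
  assumes "Re c = 0"
  shows "norm (generator_laplace e c) \<le> 3 / 2"
proof (cases "e = 0")
  case True
  then show ?thesis
    using norm_hat_laplace_le_1[OF assms] by (simp add: generator_laplace_def)
next
  case False
  have "norm (\<Sum>j\<in>{-1..3::int}. of_real (bcoef j) * exp (c * of_int j / 2)) * norm (hat_laplace (c / 2)) \<le> 3 * 1"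
    using assms by (intro mult_mono norm_bcoef_exp_sum_le norm_hat_laplace_le_1) auto
  then show ?thesis
    using False by (simp add: generator_laplace_def norm_mult norm_divide)
qed

lemma norm_generator_laplace_le_decay:
  assumes "Re c = 0" and "c \<noteq> 0"
  shows "norm (generator_laplace e c) \<le> 24 / (norm c)\<^sup>2"
proof (cases "e = 0")
  case True
  have "4 / (norm c)\<^sup>2 \<le> 24 / (norm c)\<^sup>2"
    by (intro divide_right_mono) auto
  then show ?thesis
    using True norm_hat_laplace_le[OF assms] by (simp add: generator_laplace_def)
next
  case False
  have "norm (hat_laplace (c / 2)) \<le> 4 / (norm (c / 2))\<^sup>2"
    using assms by (intro norm_hat_laplace_le) auto
  then have "norm (\<Sum>j\<in>{-1..3::int}. of_real (bcoef j) * exp (c * of_int j / 2)) * norm (hat_laplace (c / 2))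
      \<le> 3 * (4 / (norm (c / 2))\<^sup>2)"
    using assms by (intro mult_mono norm_bcoef_exp_sum_le) auto
  then show ?thesis
    using False by (simp add: generator_laplace_def norm_mult norm_divide power_divide)
qed

section \<open>Periodization and one-dimensional Fourier coefficients\<close>

definition generator_lk :: "nat \<Rightarrow> int \<Rightarrow> nat \<Rightarrow> real \<Rightarrow> real" where
  "generator_lk l k e s = 2 powr (real l / 2) * generator e (2 ^ l * s - of_int k)"

lemma theta_eq_periodize: "theta l k e = periodize (generator_lk l k e)"
  unfolding theta_def generator_lk_def generator_def by (simp add: if_distrib)

lemma real_succ_le_two_power:
  assumes "k < 2 ^ l"
  shows "real_of_int k + 1 \<le> 2 ^ l"
proof -
  have "real_of_int (k + 1) \<le> real_of_int (2 ^ l)"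
    using assms by (simp only: of_int_le_iff)
  then show ?thesis
    by simp
qed

lemma generator_lk_eq_0:
  assumes "0 \<le> k" "k < 2 ^ l" and s: "s \<notin> {-1<..<2}"
  shows "generator_lk l k e s = 0"
proof -
  have k: "0 \<le> real_of_int k" "real_of_int k + 1 \<le> 2 ^ l"
    using assms(1) real_succ_le_two_power[OF assms(2)] by simp_all
  consider "s \<le> -1" | "2 \<le> s"
    using s by force
  then have "2 ^ l * s - of_int k \<notin> {-1<..<2}"
  proof cases
    case 1
    have "2 ^ l * s \<le> 2 ^ l * -1"
      using 1 by (intro mult_left_mono) auto
    then show ?thesis
      using k by simp
  next
    case 2
    have "2 ^ l * 2 \<le> 2 ^ l * s" "(1 :: real) \<le> 2 ^ l"
      using 2 by (intro mult_left_mono) auto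
    then have "2 \<le> 2 ^ l * s - of_int k"
      using k by linarith
    then show ?thesis
      by simp
  qed
  then show ?thesis
    by (simp add: generator_lk_def generator_eq_0)
qed

lemma has_integral_generator_lk_laplace:
  assumes "0 \<le> k" "k < 2 ^ l"
  shows "((\<lambda>s. generator_lk l k e s *\<^sub>R exp (c * of_real s)) has_integral
           2 powr (real l / 2) *\<^sub>R (exp (c * of_real (of_int k / 2 ^ l)) * generator_laplace e (c / 2 ^ l) / 2 ^ l))
         {-1..2}"
proof -
  have k: "0 \<le> real_of_int k" "real_of_int k + 1 \<le> 2 ^ l"
    using assms(1) real_succ_le_two_power[OF assms(2)] by simp_all
  have "((\<lambda>s. generator e (2 ^ l * s - of_int k) *\<^sub>R exp (c * of_real s)) has_integral
           exp (c * of_real (of_int k / 2 ^ l)) * generator_laplace e (c / 2 ^ l) / 2 ^ l) {-1..2}"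
  proof (rule has_integral_on_superset)
    have "((\<lambda>t. generator e t *\<^sub>R exp (c / of_real (2 ^ l) * of_real t)) has_integral
            generator_laplace e (c / 2 ^ l)) {-1..2}"
      using has_integral_generator_laplace[of e "c / 2 ^ l"] by simp
    from has_integral_laplace_affine[OF this, of "of_int k"]
    show "((\<lambda>s. generator e (2 ^ l * s - of_int k) *\<^sub>R exp (c * of_real s)) has_integral
           exp (c * of_real (of_int k / 2 ^ l)) * generator_laplace e (c / 2 ^ l) / 2 ^ l)
          {(-1 + of_int k) / 2 ^ l..(2 + of_int k) / 2 ^ l}"
      by simp
    show "{(-1 + of_int k) / 2 ^ l..(2 + of_int k) / 2 ^ l} \<subseteq> {-1..2::real}"
      using k by (auto simp: field_simps)
  next
    fix s :: real
    assume "s \<notin> {(-1 + of_int k) / 2 ^ l..(2 + of_int k) / 2 ^ l}"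
    then have "2 ^ l * s - of_int k \<notin> {-1<..<2}"
      by (auto simp: divide_le_eq le_divide_eq mult.commute)
    then show "generator e (2 ^ l * s - of_int k) *\<^sub>R exp (c * of_real s) = 0"
      by (simp add: generator_eq_0)
  qed
  from has_integral_cmul[OF this, of "2 powr (real l / 2)"] show ?thesis
    by (simp add: generator_lk_def)
qed

definition periodize3 :: "(real \<Rightarrow> real) \<Rightarrow> real \<Rightarrow> real" where
  "periodize3 f t = f (t - 1) + f t + f (t + 1)"

lemma periodize_eq_periodize3:
  assumes f: "\<And>s. s \<notin> {-1<..<2} \<Longrightarrow> f s = 0" and t: "t \<in> {0<..<1}"
  shows "periodize f t = periodize3 f t"
proof -
  have "periodize f t = (\<Sum>\<^sub>\<infinity>j\<in>{-1, 0, 1::int}. f (t + of_int j))"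
    unfolding periodize_def
  proof (rule infsum_cong_neutral)
    fix j :: int
    assume "j \<in> UNIV - {-1, 0, 1}"
    then have "j \<le> -2 \<or> 2 \<le> j"
      by auto
    then have "t + of_int j \<notin> {-1<..<2}"
      using t by (auto simp flip: of_int_le_iff)
    then show "f (t + of_int j) = 0"
      by (rule f)
  qed auto
  then show ?thesis
    by (simp add: periodize3_def)
qed

lemma exp_times_int_shift:
  fixes c :: complex
  assumes "exp c = 1"
  shows "exp (c * of_real (t + of_int j)) = exp (c * of_real t)"
proof -
  have "exp (c * of_real (t + of_int j)) = exp (c * of_real t) * exp c powi j"
    by (simp add: distrib_left exp_add exp_power_int mult.commute)
  then show ?thesis
    using assms by simp
qed

lemma has_integral_periodize3:
  fixes f :: "real \<Rightarrow> real" and c :: complex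
  assumes f: "\<And>s. s \<notin> {-1<..<2} \<Longrightarrow> f s = 0"
    and V: "((\<lambda>s. f s *\<^sub>R exp (c * of_real s)) has_integral V) {-1..2}"
    and c: "exp c = 1"
  shows "((\<lambda>t. periodize3 f t *\<^sub>R exp (c * of_real t)) has_integral V) {0..1}"
proof -
  define g where "g s = f s *\<^sub>R exp (c * of_real s)" for s
  define I where "I j = integral {of_int j..of_int j + 1} g" for j :: int
  have I: "(g has_integral I j) {of_int j..of_int j + 1}" if "j \<in> {-1, 0, 1}" for j
    unfolding I_def using that
    by (intro integrable_integral integrable_on_subinterval[OF has_integral_integrable[OF V[folded g_def]]]) auto
  have "(g has_integral I (-1)) {-1..0}" "(g has_integral I 0) {0..1}" "(g has_integral I 1) {1..2}"
    using I[of "-1"] I[of 0] I[of 1] by simp_all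
  then have "(g has_integral I (-1) + I 0 + I 1) {-1..2}"
    by (intro has_integral_combine[of "-1" 1 2] has_integral_combine[of "-1" 0 1]) simp_all
  then have "V = I (-1) + I 0 + I 1"
    using V[folded g_def] by (rule has_integral_unique[rotated])
  moreover
  have shift: "((\<lambda>t. g (t + of_int j)) has_integral I j) {0..1}" if "j \<in> {-1, 0, 1}" for j
    using has_integral_shift_real_ivl[OF I[OF that], of "of_int j"] by simp
  have "((\<lambda>t. g (t + -1) + g (t + 0) + g (t + 1)) has_integral I (-1) + I 0 + I 1) {0..1}"
    using shift[of "-1"] shift[of 0] shift[of 1] by (intro has_integral_add) simp_all
  moreover have "g (t + -1) + g (t + 0) + g (t + 1) = periodize3 f t *\<^sub>R exp (c * of_real t)" for t
    using exp_times_int_shift[OF c, of t "-1"] exp_times_int_shift[OF c, of t 1]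
    by (simp add: g_def periodize3_def scaleR_add_left)
  ultimately show ?thesis
    by simp
qed

(* Integration by parts: the boundary term vanishes because g and exp (c t) take equal values at 0 and 1. *)
lemma has_integral_deriv_periodic:
  fixes g g' :: "real \<Rightarrow> real" and c :: complex
  assumes g: "piecewise_deriv g g' K" and per: "g 0 = g 1" and c: "exp c = 1"
    and V: "((\<lambda>t. g t *\<^sub>R exp (c * of_real t)) has_integral V) {0..1}"
  shows "((\<lambda>t. g' t *\<^sub>R exp (c * of_real t)) has_integral - c * V) {0..1}"
proof -
  define h where "h t = g t *\<^sub>R exp (c * of_real t)" for t
  define h' where "h' t = g' t *\<^sub>R exp (c * of_real t) + c * h t" for t
  have "(h' has_integral h 1 - h 0) {0..1}"
  proof (rule fundamental_theorem_of_calculus_interior_strong)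
    show "finite K"
      using g unfolding piecewise_deriv_def by blast
    have "continuous_on {0..1} g"
      using g continuous_on_subset unfolding piecewise_deriv_def by blast
    then show "continuous_on {0..1} h"
      unfolding h_def by (intro continuous_intros)
    fix t
    assume "t \<in> {0<..<1} - K"
    then have "(g has_real_derivative g' t) (at t)"
      using g unfolding piecewise_deriv_def by blast
    then have "((\<lambda>t. complex_of_real (g t)) has_vector_derivative of_real (g' t)) (at t)"
      by (rule has_vector_derivative_of_real)
    moreover have "((\<lambda>z. exp (c * z)) has_field_derivative c * exp (c * of_real t)) (at (of_real t))"
      by (auto intro!: derivative_eq_intros)
    then have "((\<lambda>t. exp (c * of_real t)) has_vector_derivative c * exp (c * of_real t)) (at t)"
      by (rule has_vector_derivative_real_field)
    ultimately have "((\<lambda>t. of_real (g t) * exp (c * of_real t)) has_vector_derivative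
                 of_real (g t) * (c * exp (c * of_real t)) + of_real (g' t) * exp (c * of_real t)) (at t)"
      by (rule has_vector_derivative_mult)
    then show "(h has_vector_derivative h' t) (at t)"
      by (simp add: h_def [abs_def] h'_def scaleR_conv_of_real algebra_simps)
  qed simp
  moreover have "h 1 - h 0 = 0"
    using per c by (simp add: h_def)
  ultimately have "((\<lambda>t. h' t - c * h t) has_integral 0 - c * V) {0..1}"
    using V[folded h_def] by (intro has_integral_diff has_integral_mult_right) simp_all
  then show ?thesis
    by (simp add: h'_def)
qed

lemma piecewise_deriv_generator: "\<exists>g' K. piecewise_deriv (generator e) g' K"
proof (cases "e = 0")
  case True
  then show ?thesis
    using piecewise_deriv_hat unfolding generator_def by auto
next
  case False
  then show ?thesis
    using piecewise_deriv_wav unfolding generator_def by auto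
qed

lemma piecewise_deriv_generator_lk: "\<exists>g' K. piecewise_deriv (generator_lk l k e) g' K"
proof -
  obtain g' K where "piecewise_deriv (generator e) g' K"
    using piecewise_deriv_generator by blast
  then have "piecewise_deriv (\<lambda>s. 2 powr (real l / 2) * generator e (2 ^ l * s + - of_int k))
     (\<lambda>s. 2 powr (real l / 2) * (2 ^ l * g' (2 ^ l * s + - of_int k))) ((\<lambda>y. (y - - of_int k) / 2 ^ l) ` K)"
    by (intro piecewise_deriv_cmult piecewise_deriv_affine) simp_all
  then show ?thesis
    unfolding generator_lk_def by auto
qed

lemma piecewise_deriv_periodize3:
  assumes "piecewise_deriv f f' K"
  shows "\<exists>K'. piecewise_deriv (periodize3 f) (periodize3 f') K'"
proof -
  have "piecewise_deriv (\<lambda>t. f (1 * t + b)) (\<lambda>t. 1 * f' (1 * t + b)) ((\<lambda>y. (y - b) / 1) ` K)" for b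
    by (rule piecewise_deriv_affine[OF _ assms]) simp
  from piecewise_deriv_add[OF piecewise_deriv_add[OF this[of "-1"] this[of 0]] this[of 1]]
  show ?thesis
    unfolding periodize3_def by auto
qed

(* The same convention as pd: the derivative where it exists and 0 elsewhere. *)
definition vderiv :: "(real \<Rightarrow> complex) \<Rightarrow> real \<Rightarrow> complex" where
  "vderiv f t = (if \<exists>D. (f has_vector_derivative D) (at t) then vector_derivative f (at t) else 0)"

lemma vderiv_eq: "(f has_vector_derivative D) (at t) \<Longrightarrow> vderiv f t = D"
  unfolding vderiv_def using vector_derivative_at by auto

definition fourier_coeff :: "(real \<Rightarrow> complex) \<Rightarrow> int \<Rightarrow> complex" where
  "fourier_coeff u q = (LINT t:{0<..<1}|lborel. u t * exp (- (2 * pi * \<i> * of_int q) * of_real t))"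

definition fourier_deriv_rule :: "(real \<Rightarrow> complex) \<Rightarrow> int \<Rightarrow> bool" where
  "fourier_deriv_rule u q \<longleftrightarrow>
     set_integrable lborel {0<..<1} (\<lambda>t. u t * exp (- (2 * pi * \<i> * of_int q) * of_real t)) \<and>
     set_integrable lborel {0<..<1} (\<lambda>t. vderiv u t * exp (- (2 * pi * \<i> * of_int q) * of_real t)) \<and>
     fourier_coeff (vderiv u) q = 2 * pi * \<i> * of_int q * fourier_coeff u q"

lemma exp_2pi_int: "exp (- (2 * pi * \<i> * of_int q)) = 1"
  using exp_integer_2pi[of "- of_int q"] by (simp add: mult_ac)

lemma set_integral_if_has_integral:
  fixes f :: "real \<Rightarrow> 'a::euclidean_space"
  assumes "a \<le> b" and "(f has_integral I) {a..b}" and [measurable]: "f \<in> borel_measurable borel"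
    and "\<And>t. t \<in> {a<..<b} \<Longrightarrow> norm (f t) \<le> B"
  shows "set_integrable lborel {a<..<b} f" "(LINT t:{a<..<b}|lborel. f t) = I"
proof -
  show int: "set_integrable lborel {a<..<b} f"
    unfolding set_integrable_def
    by (rule integrableI_bounded_set[where A = "{a<..<b}" and B = B]) (use assms(1,4) in auto)
  have "(f has_integral I) {a<..<b}"
    using assms(2) by (simp add: has_integral_Icc_iff_Ioo)
  then show "(LINT t:{a<..<b}|lborel. f t) = I"
    using set_borel_integral_eq_integral(2)[OF int] by (simp add: integral_unique)
qed

lemma fourier_coeff_if_has_integral:
  fixes f :: "real \<Rightarrow> real" and u :: "real \<Rightarrow> complex" and q :: int
  defines "E \<equiv> \<lambda>t. exp (- (2 * pi * \<i> * of_int q) * of_real t)"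
  assumes V: "((\<lambda>t. f t *\<^sub>R E t) has_integral V) {0..1}" and [measurable]: "f \<in> borel_measurable borel"
    and B: "\<And>t. t \<in> {0<..<1} \<Longrightarrow> \<bar>f t\<bar> \<le> B"
    and K: "finite K" and u: "\<And>t. t \<in> {0<..<1} - K \<Longrightarrow> u t = of_real (f t)"
  shows "set_integrable lborel {0<..<1} (\<lambda>t. u t * E t)" and "fourier_coeff u q = V"
proof -
  have "norm (f t *\<^sub>R E t) \<le> B" if "t \<in> {0<..<1}" for t
    using B[OF that] by (simp add: E_def norm_exp_eq_Re)
  moreover have [measurable]: "E \<in> borel_measurable borel"
    unfolding E_def by (intro borel_measurable_continuous_onI continuous_intros)
  then have "(\<lambda>t. f t *\<^sub>R E t) \<in> borel_measurable borel"
    by measurable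
  ultimately have int: "set_integrable lborel {0<..<1} (\<lambda>t. f t *\<^sub>R E t)"
    and eq: "(LINT t:{0<..<1}|lborel. f t *\<^sub>R E t) = V"
    using set_integral_if_has_integral[of 0 1 "\<lambda>t. f t *\<^sub>R E t" V B] V by auto
  have off_K: "indicator {0<..<1} t *\<^sub>R (u t * E t) = indicator {0<..<1} t *\<^sub>R (f t *\<^sub>R E t)"
    if "t \<notin> K" for t
    using u[of t] that by (cases "t \<in> {0<..<1}") (auto simp: scaleR_conv_of_real)
  show "set_integrable lborel {0<..<1} (\<lambda>t. u t * E t)"
    using int K off_K unfolding set_integrable_def
    by (subst integrable_discrete_difference[where X = K]) (simp_all add: countable_finite)
  have "fourier_coeff u q = (LINT t:{0<..<1}|lborel. u t * E t)"
    by (simp add: fourier_coeff_def E_def)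
  also have "\<dots> = V"
    using K off_K unfolding eq[symmetric] set_lebesgue_integral_def
    by (intro integral_discrete_difference[where X = K]) (simp_all add: countable_finite)
  finally show "fourier_coeff u q = V" .
qed

lemma vderiv_of_real_on_open:
  assumes "open S" "t \<in> S" "\<And>s. s \<in> S \<Longrightarrow> u s = of_real (g s)" "(g has_real_derivative D) (at t)"
  shows "vderiv u t = of_real D"
proof -
  have "((\<lambda>s. complex_of_real (g s)) has_vector_derivative of_real D) (at t)"
    using assms(4) by (rule has_vector_derivative_of_real)
  then have "(u has_vector_derivative of_real D) (at t)"
    by (rule has_vector_derivative_transform_within_open) (use assms in auto)
  then show ?thesis
    by (rule vderiv_eq)
qed

lemma fourier_deriv_rule_periodic:
  fixes g g' :: "real \<Rightarrow> real" and u :: "real \<Rightarrow> complex"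
  assumes g: "piecewise_deriv g g' K" and per: "g 0 = g 1"
    and u: "\<And>t. t \<in> {0<..<1} \<Longrightarrow> u t = of_real (g t)"
    and V: "((\<lambda>t. g t *\<^sub>R exp (- (2 * pi * \<i> * of_int q) * of_real t)) has_integral V) {0..1}"
  shows "fourier_deriv_rule u q" and "fourier_coeff u q = V"
proof -
  obtain B where B: "\<And>t. \<bar>g' t\<bar> \<le> B" and K: "finite K"
    and [measurable]: "g' \<in> borel_measurable borel" and cont: "continuous_on UNIV g"
    using g unfolding piecewise_deriv_def by blast
  have "continuous_on {0..1} g"
    using cont by (rule continuous_on_subset) simp
  then obtain C where C: "\<And>t. t \<in> {0..1} \<Longrightarrow> norm (g t) \<le> C"
    by (meson compact_Icc continuous_on_compact_bound)
  have [measurable]: "g \<in> borel_measurable borel"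
    using cont by (rule borel_measurable_continuous_onI)
  have V': "((\<lambda>t. g' t *\<^sub>R exp (- (2 * pi * \<i> * of_int q) * of_real t)) has_integral
             2 * pi * \<i> * of_int q * V) {0..1}"
    using has_integral_deriv_periodic[OF g per exp_2pi_int V] by simp
  have du: "vderiv u t = of_real (g' t)" if "t \<in> {0<..<1} - K" for t
    using g that u unfolding piecewise_deriv_def by (intro vderiv_of_real_on_open[of "{0<..<1}"]) auto
  have "set_integrable lborel {0<..<1} (\<lambda>t. u t * exp (- (2 * pi * \<i> * of_int q) * of_real t))"
    and "fourier_coeff u q = V"
    using fourier_coeff_if_has_integral[OF V _ _ K, of C u] C u by auto
  moreover have "set_integrable lborel {0<..<1} (\<lambda>t. vderiv u t * exp (- (2 * pi * \<i> * of_int q) * of_real t))"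
    and "fourier_coeff (vderiv u) q = 2 * pi * \<i> * of_int q * V"
    using fourier_coeff_if_has_integral[OF V' _ B K du] by auto
  ultimately show "fourier_deriv_rule u q" "fourier_coeff u q = V"
    unfolding fourier_deriv_rule_def by simp_all
qed

lemma theta_fourier:
  fixes l e :: nat and k q :: int
  assumes k: "0 \<le> k" "k < 2 ^ l"
  defines "c \<equiv> - (2 * pi * \<i> * of_int q)"
  shows "fourier_deriv_rule (\<lambda>t. of_real (theta l k e t)) q"
    and "fourier_coeff (\<lambda>t. of_real (theta l k e t)) q =
           2 powr (real l / 2) *\<^sub>R (exp (c * of_real (of_int k / 2 ^ l)) * generator_laplace e (c / 2 ^ l) / 2 ^ l)"
proof -
  define g where "g = periodize3 (generator_lk l k e)"
  have zero: "generator_lk l k e s = 0" if "s \<notin> {-1<..<2}" for s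
    using generator_lk_eq_0[OF k that] .
  obtain f' K where "piecewise_deriv (generator_lk l k e) f' K"
    using piecewise_deriv_generator_lk by blast
  then obtain K where g: "piecewise_deriv g (periodize3 f') K"
    unfolding g_def using piecewise_deriv_periodize3 by blast
  have per: "g 0 = g 1"
    using zero by (simp add: g_def periodize3_def)
  have u: "complex_of_real (theta l k e t) = of_real (g t)" if "t \<in> {0<..<1}" for t
    unfolding theta_eq_periodize g_def using periodize_eq_periodize3[OF zero that] by simp
  have "((\<lambda>t. g t *\<^sub>R exp (c * of_real t)) has_integral
      2 powr (real l / 2) *\<^sub>R (exp (c * of_real (of_int k / 2 ^ l)) * generator_laplace e (c / 2 ^ l) / 2 ^ l)) {0..1}"
    unfolding g_def c_def by (rule has_integral_periodize3[OF zero has_integral_generator_lk_laplace[OF k] exp_2pi_int])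
  from fourier_deriv_rule_periodic[OF g per u this[unfolded c_def]]
  show "fourier_deriv_rule (\<lambda>t. of_real (theta l k e t)) q"
    and "fourier_coeff (\<lambda>t. of_real (theta l k e t)) q =
           2 powr (real l / 2) *\<^sub>R (exp (c * of_real (of_int k / 2 ^ l)) * generator_laplace e (c / 2 ^ l) / 2 ^ l)"
    unfolding c_def by simp_all
qed

section \<open>Tensor products on the cube\<close>

lemma indicator_cube:
  assumes "x \<in> space (cube_measure n)"
  shows "indicator (cube n) x = (\<Prod>j<n. indicator {0<..<1} (x j) :: real)"
proof -
  have "x \<in> extensional {..<n}"
    using assms by (simp add: cube_measure_def space_PiM PiE_iff)
  then have cube: "x \<in> cube n \<longleftrightarrow> (\<forall>j<n. x j \<in> {0<..<1})"
    by (auto simp: cube_def PiE_iff)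
  show ?thesis
  proof (cases "\<forall>j<n. x j \<in> {0<..<1}")
    case True
    then show ?thesis
      using cube by simp
  next
    case False
    then obtain j where "j < n" "x j \<notin> {0<..<1}"
      by blast
    then have "(\<Prod>j<n. indicator {0<..<1} (x j) :: real) = 0"
      by (intro prod_zero) (auto intro!: bexI[of _ j])
    then show ?thesis
      using cube False by simp
  qed
qed

lemma set_integral_cube_prod:
  fixes f :: "nat \<Rightarrow> real \<Rightarrow> complex"
  assumes "\<And>j. j < n \<Longrightarrow> set_integrable lborel {0<..<1} (f j)"
  shows "set_integrable (cube_measure n) (cube n) (\<lambda>x. \<Prod>j<n. f j (x j))"
    and "(LINT x:cube n|cube_measure n. \<Prod>j<n. f j (x j)) = (\<Prod>j<n. LINT t:{0<..<1}|lborel. f j t)"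
proof -
  interpret product_sigma_finite "\<lambda>_. lborel :: real measure"
    by (simp add: product_sigma_finite_def sigma_finite_lborel)
  define g where "g j t = indicator {0<..<1} t *\<^sub>R f j t" for j t
  have eq: "indicator (cube n) x *\<^sub>R (\<Prod>j<n. f j (x j)) = (\<Prod>j<n. g j (x j))"
    if "x \<in> space (cube_measure n)" for x
    by (simp add: g_def indicator_cube[OF that] scaleR_conv_of_real prod.distrib)
  have int: "integrable lborel (g j)" if "j \<in> {..<n}" for j
    using assms that by (simp add: set_integrable_def g_def [abs_def])
  have "integrable (cube_measure n) (\<lambda>x. \<Prod>j<n. g j (x j))"
    unfolding cube_measure_def by (rule product_integrable_prod[OF finite_lessThan int])
  then show "set_integrable (cube_measure n) (cube n) (\<lambda>x. \<Prod>j<n. f j (x j))"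
    unfolding set_integrable_def by (subst Bochner_Integration.integrable_cong[OF refl eq])
  have "integral\<^sup>L (cube_measure n) (\<lambda>x. \<Prod>j<n. g j (x j)) = (\<Prod>j<n. integral\<^sup>L lborel (g j))"
    unfolding cube_measure_def by (rule product_integral_prod[OF finite_lessThan int])
  then show "(LINT x:cube n|cube_measure n. \<Prod>j<n. f j (x j)) = (\<Prod>j<n. LINT t:{0<..<1}|lborel. f j t)"
    unfolding set_lebesgue_integral_def g_def[symmetric]
    by (subst Bochner_Integration.integral_cong[OF refl eq])
qed

lemma cnj_xi: "cnj (xi n q x) = (\<Prod>j<n. exp (- (2 * pi * \<i> * of_int (q j)) * of_real (x j)))"
  unfolding xi_def exp_cnj
  by (simp add: exp_sum[symmetric] sum_negf[symmetric] sum_distrib_left mult_ac)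

lemma ip_tensor_xi:
  assumes "\<And>j. j < n \<Longrightarrow> set_integrable lborel {0<..<1} (\<lambda>t. u j t * exp (- (2 * pi * \<i> * of_int (q j)) * of_real t))"
  shows "set_integrable (cube_measure n) (cube n) (\<lambda>x. (\<Prod>j<n. u j (x j)) * cnj (xi n q x))"
    and "ip n (\<lambda>x. \<Prod>j<n. u j (x j)) (xi n q) = (\<Prod>j<n. fourier_coeff (u j) (q j))"
proof -
  have eq: "(\<Prod>j<n. u j (x j)) * cnj (xi n q x) =
      (\<Prod>j<n. u j (x j) * exp (- (2 * pi * \<i> * of_int (q j)) * of_real (x j)))" for x
    by (simp add: cnj_xi prod.distrib)
  show "set_integrable (cube_measure n) (cube n) (\<lambda>x. (\<Prod>j<n. u j (x j)) * cnj (xi n q x))"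
    unfolding eq by (rule set_integral_cube_prod(1)[OF assms])
  show "ip n (\<lambda>x. \<Prod>j<n. u j (x j)) (xi n q) = (\<Prod>j<n. fourier_coeff (u j) (q j))"
    unfolding ip_def eq fourier_coeff_def by (rule set_integral_cube_prod(2)[OF assms])
qed

lemma vderiv_cmult: "vderiv (\<lambda>t. C * f t) s = C * vderiv f s"
proof (cases "\<exists>D. (f has_vector_derivative D) (at s)")
  case True
  then obtain D where "(f has_vector_derivative D) (at s)" ..
  then show ?thesis
    using vderiv_eq has_vector_derivative_mult_right by metis
next
  case no_deriv: False
  show ?thesis
  proof (cases "C = 0")
    case True
    then show ?thesis
      by (simp add: vderiv_eq)
  next
    case False
    have "\<not> ((\<lambda>t. C * f t) has_vector_derivative D) (at s)" for D
    proof
      assume "((\<lambda>t. C * f t) has_vector_derivative D) (at s)"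
      then have "((\<lambda>t. inverse C * (C * f t)) has_vector_derivative inverse C * D) (at s)"
        by (rule has_vector_derivative_mult_right)
      with False no_deriv show False
        by (simp flip: mult.assoc)
    qed
    with no_deriv show ?thesis
      by (simp add: vderiv_def)
  qed
qed

lemma pd_eq_vderiv: "pd j u x = vderiv (\<lambda>t. u (x(j := t))) (x j)"
  unfolding pd_def vderiv_def by simp

lemma pd_tensor:
  assumes "j < n"
  shows "pd j (\<lambda>x. \<Prod>i<n. u i (x i)) x = (\<Prod>i<n. (if i = j then vderiv (u i) else u i) (x i))"
proof -
  define C where "C = (\<Prod>i\<in>{..<n} - {j}. u i (x i))"
  have split: "(\<Prod>i<n. v i) = v j * (\<Prod>i\<in>{..<n} - {j}. v i)" for v :: "nat \<Rightarrow> complex"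
    using assms by (simp add: prod.remove)
  have "(\<Prod>i<n. u i ((x(j := t)) i)) = C * u j t" for t
    unfolding split[of "\<lambda>i. u i ((x(j := t)) i)"] C_def by (simp add: mult.commute)
  then have "pd j (\<lambda>x. \<Prod>i<n. u i (x i)) x = C * vderiv (u j) (x j)"
    by (simp add: pd_eq_vderiv vderiv_cmult)
  then show ?thesis
    unfolding split[of "\<lambda>i. (if i = j then vderiv (u i) else u i) (x i)"] C_def by (simp add: mult.commute)
qed

lemma pd_xi:
  assumes "j < n"
  shows "pd j (xi n q) x = 2 * pi * \<i> * of_int (q j) * xi n q x"
proof -
  define c where "c = 2 * pi * \<i> * of_int (q j)"
  define d where "d = 2 * pi * \<i> * of_real (\<Sum>i\<in>{..<n} - {j}. real_of_int (q i) * x i)"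
  have xi_upd: "xi n q (x(j := t)) = exp (c * of_real t + d)" for t
  proof -
    have "(\<Sum>i<n. real_of_int (q i) * (x(j := t)) i) = real_of_int (q j) * t + (\<Sum>i\<in>{..<n} - {j}. real_of_int (q i) * x i)"
      using assms by (simp add: sum.remove)
    then show ?thesis
      unfolding xi_def c_def d_def by (simp add: algebra_simps)
  qed
  have "((\<lambda>z. exp (c * z + d)) has_field_derivative c * exp (c * of_real (x j) + d)) (at (of_real (x j)))"
    by (auto intro!: derivative_eq_intros)
  then have "((\<lambda>t. exp (c * of_real t + d)) has_vector_derivative c * exp (c * of_real (x j) + d)) (at (x j))"
    by (rule has_vector_derivative_real_field)
  then have "((\<lambda>t. xi n q (x(j := t))) has_vector_derivative c * xi n q x) (at (x j))"
    unfolding xi_upd using xi_upd[of "x j"] by simp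
  then show ?thesis
    unfolding pd_eq_vderiv c_def by (rule vderiv_eq)
qed

lemma prod_if_eq_mult:
  fixes f :: "nat \<Rightarrow> 'a::comm_monoid_mult"
  assumes "j \<in> A" "finite A"
  shows "(\<Prod>i\<in>A. if i = j then a * f i else f i) = a * (\<Prod>i\<in>A. f i)"
proof -
  have "(\<Prod>i\<in>A. if i = j then a * f i else f i) = a * f j * (\<Prod>i\<in>A - {j}. f i)"
    using assms by (simp add: prod.remove)
  also have "\<dots> = a * (\<Prod>i\<in>A. f i)"
    using assms by (simp add: prod.remove mult.assoc)
  finally show ?thesis .
qed

lemma ip_pd_tensor_xi:
  assumes u: "\<And>i. i < n \<Longrightarrow> fourier_deriv_rule (u i) (q i)" and j: "j < n"
  shows "set_integrable (cube_measure n) (cube n) (\<lambda>x. pd j (\<lambda>x. \<Prod>i<n. u i (x i)) x * cnj (xi n q x))"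
    and "ip n (pd j (\<lambda>x. \<Prod>i<n. u i (x i))) (xi n q) =
           2 * pi * \<i> * of_int (q j) * (\<Prod>i<n. fourier_coeff (u i) (q i))"
proof -
  define v where "v i = (if i = j then vderiv (u i) else u i)" for i
  have pd: "pd j (\<lambda>x. \<Prod>i<n. u i (x i)) = (\<lambda>x. \<Prod>i<n. v i (x i))"
    using pd_tensor[OF j] by (auto simp: v_def)
  have v: "set_integrable lborel {0<..<1} (\<lambda>t. v i t * exp (- (2 * pi * \<i> * of_int (q i)) * of_real t))"
    if "i < n" for i
    using u[OF that] by (cases "i = j") (simp_all add: v_def fourier_deriv_rule_def)
  show "set_integrable (cube_measure n) (cube n) (\<lambda>x. pd j (\<lambda>x. \<Prod>i<n. u i (x i)) x * cnj (xi n q x))"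
    unfolding pd by (rule ip_tensor_xi(1)[OF v])
  have "ip n (pd j (\<lambda>x. \<Prod>i<n. u i (x i))) (xi n q) = (\<Prod>i<n. fourier_coeff (v i) (q i))"
    unfolding pd by (rule ip_tensor_xi(2)[OF v])
  also have "\<dots> =
          (\<Prod>i<n. if i = j then 2 * pi * \<i> * of_int (q j) * fourier_coeff (u i) (q i) else fourier_coeff (u i) (q i))"
    using u j by (intro prod.cong) (auto simp: v_def fourier_deriv_rule_def)
  also have "\<dots> = 2 * pi * \<i> * of_int (q j) * (\<Prod>i<n. fourier_coeff (u i) (q i))"
    using j by (simp add: prod_if_eq_mult)
  finally show "ip n (pd j (\<lambda>x. \<Prod>i<n. u i (x i))) (xi n q) =
           2 * pi * \<i> * of_int (q j) * (\<Prod>i<n. fourier_coeff (u i) (q i))" .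
qed

lemma set_integral_sum:
  fixes f :: "'i \<Rightarrow> 'a \<Rightarrow> 'b::{banach, second_countable_topology}"
  assumes "finite I" "\<And>i. i \<in> I \<Longrightarrow> set_integrable M A (f i)"
  shows "(LINT x:A|M. \<Sum>i\<in>I. f i x) = (\<Sum>i\<in>I. LINT x:A|M. f i x)"
  unfolding set_lebesgue_integral_def scaleR_sum_right
  by (rule Bochner_Integration.integral_sum) (use assms in \<open>simp add: set_integrable_def\<close>)

lemma sets_cube: "cube n \<in> sets (cube_measure n)"
  unfolding cube_def cube_measure_def by (rule sets_PiM_I_finite) auto

lemma gip_tensor_xi:
  assumes "\<And>i. i < n \<Longrightarrow> fourier_deriv_rule (u i) (q i)"
  shows "gip n (\<lambda>x. \<Prod>i<n. u i (x i)) (xi n q) =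
           of_real (4 * pi\<^sup>2 * (\<Sum>j<n. (real_of_int (q j))\<^sup>2)) * (\<Prod>i<n. fourier_coeff (u i) (q i))"
proof -
  define U where "U = (\<lambda>x. \<Prod>i<n. u i (x i))"
  define a where "a j = cnj (2 * pi * \<i> * of_int (q j))" for j
  have int: "set_integrable (cube_measure n) (cube n) (\<lambda>x. a j * (pd j U x * cnj (xi n q x)))"
    if "j \<in> {..<n}" for j
    using that unfolding U_def by (intro set_integrable_mult_right ip_pd_tensor_xi(1)[OF assms]) auto
  have "gip n U (xi n q) = (LINT x:cube n|cube_measure n. \<Sum>j<n. a j * (pd j U x * cnj (xi n q x)))"
    unfolding gip_def a_def
    by (intro set_lebesgue_integral_cong[OF sets_cube] allI impI sum.cong) (auto simp: pd_xi)
  also have "\<dots> = (\<Sum>j<n. a j * ip n (pd j U) (xi n q))"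
    unfolding ip_def using set_integral_sum[OF finite_lessThan int] by simp
  also have "\<dots> = (\<Sum>j<n. of_real (4 * pi\<^sup>2 * (real_of_int (q j))\<^sup>2) * (\<Prod>i<n. fourier_coeff (u i) (q i)))"
    using ip_pd_tensor_xi(2)[OF assms] unfolding U_def a_def
    by (intro sum.cong) (simp_all add: power2_eq_square mult_ac)
  finally show ?thesis
    by (simp add: U_def sum_distrib_left sum_distrib_right)
qed

lemma dirder_tensor_xi:
  assumes "\<And>i. i < n \<Longrightarrow> fourier_deriv_rule (u i) (q i)"
  shows "ip n (dirder n \<beta> (\<lambda>x. \<Prod>i<n. u i (x i))) (xi n q) =
           \<i> * of_real (2 * pi * (\<Sum>j<n. \<beta> j * real_of_int (q j))) * (\<Prod>i<n. fourier_coeff (u i) (q i))"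
proof -
  define U where "U = (\<lambda>x. \<Prod>i<n. u i (x i))"
  have int: "set_integrable (cube_measure n) (cube n) (\<lambda>x. of_real (\<beta> j) * (pd j U x * cnj (xi n q x)))"
    if "j \<in> {..<n}" for j
    using that unfolding U_def by (intro set_integrable_mult_right ip_pd_tensor_xi(1)[OF assms]) auto
  have "ip n (dirder n \<beta> U) (xi n q) =
          (LINT x:cube n|cube_measure n. \<Sum>j<n. of_real (\<beta> j) * (pd j U x * cnj (xi n q x)))"
    unfolding ip_def dirder_def
    by (intro set_lebesgue_integral_cong[OF sets_cube]) (simp add: sum_distrib_right mult.assoc)
  also have "\<dots> = (\<Sum>j<n. of_real (\<beta> j) * ip n (pd j U) (xi n q))"
    unfolding ip_def using set_integral_sum[OF finite_lessThan int] by simp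
  also have "\<dots> = (\<Sum>j<n. \<i> * of_real (2 * pi * (\<beta> j * real_of_int (q j))) * (\<Prod>i<n. fourier_coeff (u i) (q i)))"
    using ip_pd_tensor_xi(2)[OF assms] unfolding U_def by (intro sum.cong) (simp_all add: mult_ac)
  finally show ?thesis
    by (simp add: U_def sum_distrib_left sum_distrib_right)
qed

section \<open>Bounds for the coefficients\<close>

lemma two_powr_half_div: "2 powr (real l / 2) / 2 ^ l = 2 powr - (real l / 2)"
  by (simp add: powr_realpow[symmetric] powr_diff[symmetric])

lemma theta_coeff_0:
  assumes "0 \<le> k" "k < 2 ^ l"
  shows "fourier_coeff (\<lambda>t. of_real (theta l k e t)) 0 = (if e = 0 then 2 powr - (real l / 2) else 0)"
proof -
  have "complex_of_real (2 powr (real l / 2)) / 2 ^ l = of_real (2 powr - (real l / 2))"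
    by (simp flip: two_powr_half_div)
  then show ?thesis
    using theta_fourier(2)[OF assms, of e 0] by (simp add: generator_laplace_0 scaleR_conv_of_real)
qed

lemma le_powr_interpolate:
  fixes u x \<gamma> :: real
  assumes "0 < u" "0 \<le> \<gamma>" "\<gamma> \<le> 2" and "x \<le> 1" "x \<le> u\<^sup>2"
  shows "x \<le> u powr (2 - \<gamma>)"
proof (cases "1 \<le> u")
  case True
  then show ?thesis
    using assms ge_one_powr_ge_zero[of u "2 - \<gamma>"] by linarith
next
  case False
  then have "u powr 2 \<le> u powr (2 - \<gamma>)"
    using assms by (intro powr_mono') auto
  then show ?thesis
    using assms by simp
qed

(* Interpolation between the trivial bound and the decay bound of the Fourier transform. *)
lemma norm_theta_coeff_le:
  assumes k: "0 \<le> k" "k < 2 ^ l" and q: "q \<noteq> 0" and \<gamma>: "0 \<le> \<gamma>" "\<gamma> \<le> 2"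
  shows "norm (fourier_coeff (\<lambda>t. of_real (theta l k e t)) q)
           \<le> 2 * 2 powr - (real l / 2) * (2 ^ l / \<bar>real_of_int q\<bar>) powr (2 - \<gamma>)"
proof -
  define c where "c = - (2 * pi * \<i> * of_int q) / 2 ^ l"
  define R where "R = 2 powr - (real l / 2)"
  define u where "u = 2 ^ l / \<bar>real_of_int q\<bar>"
  have c: "Re c = 0" "c \<noteq> 0" "norm c = 2 * pi / u"
    using q by (auto simp: c_def u_def norm_mult norm_divide norm_power)
  have R: "0 < R" and u: "0 < u"
    using q by (auto simp: R_def u_def)
  have coeff: "norm (fourier_coeff (\<lambda>t. of_real (theta l k e t)) q) = R * norm (generator_laplace e c)"
    using theta_fourier(2)[OF k, of e q] R
    by (simp add: c_def R_def norm_mult norm_divide norm_power flip: two_powr_half_div)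
  have "norm (generator_laplace e c) \<le> 2"
    using norm_generator_laplace_le[OF c(1), of e] by simp
  moreover have "norm (generator_laplace e c) \<le> u\<^sup>2"
  proof -
    have "norm (generator_laplace e c) \<le> 24 / (2 * pi / u)\<^sup>2"
      using norm_generator_laplace_le_decay[OF c(1,2)] c(3) by simp
    also have "\<dots> = (6 / pi\<^sup>2) * u\<^sup>2"
      using u by (simp add: field_simps power2_eq_square)
    also have "\<dots> \<le> 1 * u\<^sup>2"
    proof (intro mult_right_mono)
      have "3 * 3 \<le> pi * pi"
        using pi_gt3 by (intro mult_mono) auto
      then show "6 / pi\<^sup>2 \<le> 1"
        by (simp add: power2_eq_square)
    qed simp
    finally show ?thesis
      by simp
  qed
  ultimately have "norm (generator_laplace e c) / 2 \<le> u powr (2 - \<gamma>)"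
    using norm_ge_zero[of "generator_laplace e c"] by (intro le_powr_interpolate[OF u \<gamma>]) linarith+
  then show ?thesis
    unfolding coeff using R by (simp add: R_def u_def mult_left_mono mult.assoc)
qed

lemma supp_v_eq_filter: "supp_v n q = {i \<in> {..<n}. q i \<noteq> 0}"
  by (auto simp: supp_v_def)

lemma bnd_nonneg: "0 \<le> bnd n l q \<gamma>"
  unfolding bnd_def by (intro mult_nonneg_nonneg prod_nonneg) auto

lemma bnd_eq_prod:
  "bnd n l q \<gamma> =
     (\<Prod>i<n. 2 powr - (real l / 2) * (if q i \<noteq> 0 then (2 ^ l / \<bar>real_of_int (q i)\<bar>) powr (2 - \<gamma> i) else 1))"
proof -
  define S where "S = supp_v n q"
  have fin: "finite S"
    by (simp add: S_def supp_v_def)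
  have factor: "(2 ^ l / \<bar>real_of_int (q i)\<bar>) powr (2 - \<gamma> i) =
                2 powr ((2 - \<gamma> i) * real l) * \<bar>real_of_int (q i)\<bar> powr (\<gamma> i - 2)" if "q i \<noteq> 0" for i
  proof -
    have "(2 ^ l :: real) powr (2 - \<gamma> i) = 2 powr ((2 - \<gamma> i) * real l)"
      by (simp add: powr_realpow[symmetric] powr_powr mult.commute)
    moreover have "inverse (\<bar>real_of_int (q i)\<bar> powr (2 - \<gamma> i)) = \<bar>real_of_int (q i)\<bar> powr (\<gamma> i - 2)"
      by (simp flip: powr_minus)
    ultimately show ?thesis
      unfolding powr_divide by (simp add: divide_inverse)
  qed
  have "(\<Prod>i<n. 2 powr - (real l / 2) * (if q i \<noteq> 0 then (2 ^ l / \<bar>real_of_int (q i)\<bar>) powr (2 - \<gamma> i) else 1))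
      = (2 powr - (real l / 2)) ^ n * (\<Prod>i<n. if q i \<noteq> 0 then (2 ^ l / \<bar>real_of_int (q i)\<bar>) powr (2 - \<gamma> i) else 1)"
    by (simp only: prod.distrib prod_constant card_lessThan)
  also have "(\<Prod>i<n. if q i \<noteq> 0 then (2 ^ l / \<bar>real_of_int (q i)\<bar>) powr (2 - \<gamma> i) else 1)
      = (\<Prod>i\<in>S. (2 ^ l / \<bar>real_of_int (q i)\<bar>) powr (2 - \<gamma> i))"
    unfolding S_def supp_v_eq_filter by (rule prod.inter_filter[symmetric]) simp
  also have "(\<Prod>i\<in>S. (2 ^ l / \<bar>real_of_int (q i)\<bar>) powr (2 - \<gamma> i))
      = 2 powr (\<Sum>i\<in>S. (2 - \<gamma> i) * real l) * (\<Prod>i\<in>S. \<bar>real_of_int (q i)\<bar> powr (\<gamma> i - 2))"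
    by (simp add: factor S_def supp_v_def prod.distrib powr_sum)
  also have "(\<Sum>i\<in>S. (2 - \<gamma> i) * real l) = (2 * real (card S) - (\<Sum>i\<in>S. \<gamma> i)) * real l"
    by (simp add: sum_subtractf left_diff_distrib sum_distrib_right)
  finally show ?thesis
    by (simp add: bnd_def S_def powr_power powr_add[symmetric] algebra_simps)
qed

lemma PSI_eq_tensor: "PSI n l k e = (\<lambda>x. \<Prod>j<n. complex_of_real (theta l (k j) (e j) (x j)))"
  by (simp add: PSI_def psi_iso_def fun_eq_iff)

lemma PSI_xi_products:
  fixes e :: "nat \<Rightarrow> nat" and q :: "nat \<Rightarrow> int"
  assumes k: "\<forall>j<n. 0 \<le> k j \<and> k j < 2 ^ l"
  defines "P \<equiv> \<Prod>j<n. fourier_coeff (\<lambda>t. of_real (theta l (k j) (e j) t)) (q j)"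
  shows "ip n (PSI n l k e) (xi n q) = P"
    and "gip n (PSI n l k e) (xi n q) = of_real (4 * pi\<^sup>2 * (\<Sum>j<n. (real_of_int (q j))\<^sup>2)) * P"
    and "ip n (dirder n \<beta> (PSI n l k e)) (xi n q) =
           \<i> * of_real (2 * pi * (\<Sum>j<n. \<beta> j * real_of_int (q j))) * P"
proof -
  have rule: "fourier_deriv_rule (\<lambda>t. of_real (theta l (k j) (e j) t)) (q j)" if "j < n" for j
    using k that by (intro theta_fourier(1)) auto
  show "ip n (PSI n l k e) (xi n q) = P"
    unfolding PSI_eq_tensor P_def using rule by (intro ip_tensor_xi(2)) (simp add: fourier_deriv_rule_def)
  show "gip n (PSI n l k e) (xi n q) = of_real (4 * pi\<^sup>2 * (\<Sum>j<n. (real_of_int (q j))\<^sup>2)) * P"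
    unfolding PSI_eq_tensor P_def using rule by (rule gip_tensor_xi)
  show "ip n (dirder n \<beta> (PSI n l k e)) (xi n q) =
           \<i> * of_real (2 * pi * (\<Sum>j<n. \<beta> j * real_of_int (q j))) * P"
    unfolding PSI_eq_tensor P_def using rule by (rule dirder_tensor_xi)
qed

lemma PSI_xi_zero_frequency:
  assumes k: "\<forall>j<n. 0 \<le> k j \<and> k j < 2 ^ l" and q: "\<forall>j<n. q j = 0"
  shows "gip n (PSI n l k e) (xi n q) = 0"
    and "ip n (dirder n \<beta> (PSI n l k e)) (xi n q) = 0"
    and "cmod (ip n (PSI n l k e) (xi n q)) =
           (if \<forall>j<n. e j = 0 then 2 powr (- (real n * real l) / 2) else 0)"
proof -
  show "gip n (PSI n l k e) (xi n q) = 0" "ip n (dirder n \<beta> (PSI n l k e)) (xi n q) = 0"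
    using q by (simp_all add: PSI_xi_products[OF k])
  have "(\<Prod>j<n. fourier_coeff (\<lambda>t. of_real (theta l (k j) (e j) t)) (q j)) =
          (\<Prod>j<n. of_real (if e j = 0 then 2 powr - (real l / 2) else 0))"
    using k q by (intro prod.cong) (simp_all add: theta_coeff_0)
  also have "\<dots> = of_real (if \<forall>j<n. e j = 0 then (2 powr - (real l / 2)) ^ n else 0)"
  proof (cases "\<forall>j<n. e j = 0")
    case False
    then obtain j where "j < n" "e j \<noteq> 0"
      by blast
    then have "(\<Prod>j<n. complex_of_real (if e j = 0 then 2 powr - (real l / 2) else 0)) = 0"
      by (intro prod_zero bexI[of _ j]) auto
    with False show ?thesis
      by simp
  qed simp
  also have "(2 powr - (real l / 2)) ^ n = 2 powr (- (real n * real l) / 2)"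
    by (simp add: powr_power)
  finally show "cmod (ip n (PSI n l k e) (xi n q)) =
           (if \<forall>j<n. e j = 0 then 2 powr (- (real n * real l) / 2) else 0)"
    by (simp add: PSI_xi_products[OF k])
qed

lemma PSI_xi_vanish:
  assumes k: "\<forall>j<n. 0 \<le> k j \<and> k j < 2 ^ l" and "\<not> zero_v n q \<subseteq> zero_v n e"
  shows "gip n (PSI n l k e) (xi n q) = 0"
    and "ip n (dirder n \<beta> (PSI n l k e)) (xi n q) = 0"
    and "ip n (PSI n l k e) (xi n q) = 0"
proof -
  obtain i where i: "i < n" "q i = 0" "e i \<noteq> 0"
    using assms(2) by (auto simp: zero_v_def supp_v_def)
  then have "(\<Prod>j<n. fourier_coeff (\<lambda>t. of_real (theta l (k j) (e j) t)) (q j)) = 0"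
    using k by (intro prod_zero bexI[of _ i]) (simp_all add: theta_coeff_0)
  then show "gip n (PSI n l k e) (xi n q) = 0" "ip n (dirder n \<beta> (PSI n l k e)) (xi n q) = 0"
      "ip n (PSI n l k e) (xi n q) = 0"
    by (simp_all add: PSI_xi_products[OF k])
qed

lemma norm_theta_coeff_prod_le:
  assumes k: "\<forall>j<n. 0 \<le> k j \<and> k j < 2 ^ l" and zq: "zero_v n q \<subseteq> zero_v n e"
    and \<gamma>: "\<forall>j\<in>supp_v n q. 0 \<le> \<gamma> j \<and> \<gamma> j \<le> 2"
  shows "norm (\<Prod>j<n. fourier_coeff (\<lambda>t. of_real (theta l (k j) (e j) t)) (q j)) \<le> 2 ^ n * bnd n l q \<gamma>"
proof -
  define T where "T j = 2 powr - (real l / 2) *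
    (if q j \<noteq> 0 then (2 ^ l / \<bar>real_of_int (q j)\<bar>) powr (2 - \<gamma> j) else 1)" for j
  have factor: "norm (fourier_coeff (\<lambda>t. of_real (theta l (k j) (e j) t)) (q j)) \<le> 2 * T j"
    if j: "j < n" for j
  proof (cases "q j = 0")
    case True
    then have "j \<in> zero_v n q"
      using j by (simp add: zero_v_def supp_v_def)
    then have "j \<in> zero_v n e"
      using zq by (rule subsetD[rotated])
    then have "e j = 0"
      by (simp add: zero_v_def supp_v_def)
    with True show ?thesis
      using k j by (simp add: theta_coeff_0 T_def)
  next
    case False
    then have "0 \<le> \<gamma> j" "\<gamma> j \<le> 2"
      using \<gamma> j by (auto simp: supp_v_def)
    then show ?thesis
      using k j False norm_theta_coeff_le[of "k j" l "q j" "\<gamma> j" "e j"] by (simp add: T_def mult.assoc)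
  qed
  have "norm (\<Prod>j<n. fourier_coeff (\<lambda>t. of_real (theta l (k j) (e j) t)) (q j)) =
          (\<Prod>j<n. norm (fourier_coeff (\<lambda>t. of_real (theta l (k j) (e j) t)) (q j)))"
    by (rule prod_norm[symmetric])
  also have "\<dots> \<le> (\<Prod>j<n. 2 * T j)"
    using factor by (intro prod_mono) auto
  also have "\<dots> = 2 ^ n * bnd n l q \<gamma>"
    by (simp only: prod.distrib prod_constant card_lessThan bnd_eq_prod T_def)
  finally show ?thesis .
qed

lemma abs_sum_mult_le_sqrt:
  "\<bar>\<Sum>j\<in>A. f j * g j\<bar> \<le> sqrt (\<Sum>j\<in>A. (f j)\<^sup>2) * sqrt (\<Sum>j\<in>A. (g j)\<^sup>2)"
proof -
  have "\<bar>\<Sum>j\<in>A. f j * g j\<bar> \<le> (\<Sum>j\<in>A. \<bar>f j\<bar> * \<bar>g j\<bar>)"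
    by (rule order_trans[OF sum_abs]) (simp add: abs_mult)
  also have "\<dots> \<le> L2_set f A * L2_set g A"
    by (rule L2_set_mult_ineq)
  finally show ?thesis
    by (simp add: L2_set_def)
qed

lemma PSI_xi_bounds:
  assumes k: "\<forall>j<n. 0 \<le> k j \<and> k j < 2 ^ l" and zq: "zero_v n q \<subseteq> zero_v n e"
    and \<gamma>: "\<forall>j\<in>supp_v n q. 0 \<le> \<gamma> j \<and> \<gamma> j \<le> 2"
  shows "cmod (ip n (PSI n l k e) (xi n q)) \<le> 2 ^ n * bnd n l q \<gamma>"
    and "cmod (gip n (PSI n l k e) (xi n q)) \<le> 4 * pi\<^sup>2 * 2 ^ n * (bnd n l q \<gamma> * (\<Sum>j<n. (real_of_int (q j))\<^sup>2))"
    and "cmod (ip n (dirder n \<beta> (PSI n l k e)) (xi n q))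
           \<le> 2 * pi * 2 ^ n * (bnd n l q \<gamma> * (sqrt (\<Sum>j<n. (\<beta> j)\<^sup>2) * sqrt (\<Sum>j<n. (real_of_int (q j))\<^sup>2)))"
proof -
  define P where "P = (\<Prod>j<n. fourier_coeff (\<lambda>t. of_real (theta l (k j) (e j) t)) (q j))"
  define Q where "Q = (\<Sum>j<n. (real_of_int (q j))\<^sup>2)"
  have P: "norm P \<le> 2 ^ n * bnd n l q \<gamma>"
    unfolding P_def by (rule norm_theta_coeff_prod_le[OF k zq \<gamma>])
  have Q: "0 \<le> Q"
    unfolding Q_def by (intro sum_nonneg) auto
  show "cmod (ip n (PSI n l k e) (xi n q)) \<le> 2 ^ n * bnd n l q \<gamma>"
    using P by (simp add: PSI_xi_products[OF k] P_def)
  have "cmod (gip n (PSI n l k e) (xi n q)) = \<bar>4 * pi\<^sup>2 * Q\<bar> * norm P"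
    unfolding Q_def by (simp only: PSI_xi_products(2)[OF k] P_def[symmetric] norm_mult norm_of_real)
  also have "\<dots> \<le> 4 * pi\<^sup>2 * Q * (2 ^ n * bnd n l q \<gamma>)"
    using P Q by (simp add: mult_left_mono)
  finally show "cmod (gip n (PSI n l k e) (xi n q)) \<le> 4 * pi\<^sup>2 * 2 ^ n * (bnd n l q \<gamma> * Q)"
    by (simp only: mult_ac)
  have "cmod (ip n (dirder n \<beta> (PSI n l k e)) (xi n q)) = \<bar>2 * pi * (\<Sum>j<n. \<beta> j * real_of_int (q j))\<bar> * norm P"
    by (simp only: PSI_xi_products(3)[OF k] P_def[symmetric] norm_mult norm_of_real norm_ii mult_1)
  also have "\<dots> = 2 * pi * \<bar>\<Sum>j<n. \<beta> j * real_of_int (q j)\<bar> * norm P"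
    by (simp add: abs_mult)
  also have "\<dots> \<le> 2 * pi * (sqrt (\<Sum>j<n. (\<beta> j)\<^sup>2) * sqrt Q) * (2 ^ n * bnd n l q \<gamma>)"
    unfolding Q_def using P
    by (intro mult_mono mult_left_mono abs_sum_mult_le_sqrt mult_nonneg_nonneg) (auto intro!: sum_nonneg)
  finally show "cmod (ip n (dirder n \<beta> (PSI n l k e)) (xi n q))
           \<le> 2 * pi * 2 ^ n * (bnd n l q \<gamma> * (sqrt (\<Sum>j<n. (\<beta> j)\<^sup>2) * sqrt Q))"
    by (simp only: mult_ac)
qed

lemma mult_two_power_le_128_power:
  assumes "1 \<le> n" "a \<le> 64" "0 \<le> x"
  shows "a * 2 ^ n * x \<le> (128 :: real) ^ n * x"
proof -
  have "a * 2 ^ n \<le> 64 ^ n * 2 ^ n"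
    using assms(1,2) by (intro mult_right_mono order_trans[OF _ power_increasing[of 1 n 64]]) auto
  also have "\<dots> = 128 ^ n"
    by (simp flip: power_mult_distrib)
  finally show ?thesis
    using assms(3) by (rule mult_right_mono)
qed

(* The constant 128 absorbs 4 pi^2 \<le> 64 via 128^n = 64^n 2^n. *)
lemma PSI_xi_bounds_uniform:
  assumes n: "1 \<le> n" and k: "\<forall>j<n. 0 \<le> k j \<and> k j < 2 ^ l" and zq: "zero_v n q \<subseteq> zero_v n e"
    and \<gamma>: "\<forall>j\<in>supp_v n q. 0 \<le> \<gamma> j \<and> \<gamma> j \<le> 2"
  shows "cmod (gip n (PSI n l k e) (xi n q)) \<le> 128 ^ n * bnd n l q \<gamma> * (\<Sum>j<n. (real_of_int (q j))\<^sup>2)"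
    and "cmod (ip n (dirder n \<beta> (PSI n l k e)) (xi n q))
           \<le> 128 ^ n * bnd n l q \<gamma> * sqrt (\<Sum>j<n. (\<beta> j)\<^sup>2) * sqrt (\<Sum>j<n. (real_of_int (q j))\<^sup>2)"
    and "cmod (ip n (PSI n l k e) (xi n q)) \<le> 128 ^ n * bnd n l q \<gamma>"
proof -
  have "pi\<^sup>2 \<le> 4\<^sup>2"
    using pi_less_4 pi_gt_zero by (intro power_mono) auto
  then have pi: "4 * pi\<^sup>2 \<le> 64" "2 * pi \<le> 64"
    using pi_less_4 by auto
  have B: "0 \<le> bnd n l q \<gamma>" "0 \<le> bnd n l q \<gamma> * (\<Sum>j<n. (real_of_int (q j))\<^sup>2)"
    "0 \<le> bnd n l q \<gamma> * (sqrt (\<Sum>j<n. (\<beta> j)\<^sup>2) * sqrt (\<Sum>j<n. (real_of_int (q j))\<^sup>2))"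
    by (simp_all add: bnd_nonneg sum_nonneg)
  note absorb = order_trans[OF _ mult_two_power_le_128_power[OF n]]
  show "cmod (gip n (PSI n l k e) (xi n q)) \<le> 128 ^ n * bnd n l q \<gamma> * (\<Sum>j<n. (real_of_int (q j))\<^sup>2)"
    using absorb[OF PSI_xi_bounds(2)[OF k zq \<gamma>] pi(1) B(2)] by (simp only: mult.assoc)
  show "cmod (ip n (dirder n \<beta> (PSI n l k e)) (xi n q))
          \<le> 128 ^ n * bnd n l q \<gamma> * sqrt (\<Sum>j<n. (\<beta> j)\<^sup>2) * sqrt (\<Sum>j<n. (real_of_int (q j))\<^sup>2)"
    using absorb[OF PSI_xi_bounds(3)[OF k zq \<gamma>] pi(2) B(3)] by (simp only: mult.assoc)
  show "cmod (ip n (PSI n l k e) (xi n q)) \<le> 128 ^ n * bnd n l q \<gamma>"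
    using absorb[of _ 1, OF _ _ B(1)] PSI_xi_bounds(1)[OF k zq \<gamma>] by simp
qed

theorem lemma4p10:
  shows "(\<forall>n l0 l k e q. 1 < n \<and> 2 \<le> l0 \<and> l0 \<le> l \<and>
            (\<forall>j<n. 0 \<le> k j \<and> k j < 2 ^ l) \<and> (\<forall>j<n. e j \<in> {0, 1}) \<longrightarrow>
          ((\<forall>j<n. q j = 0) \<longrightarrow>
              gip n (PSI n l k e) (xi n q) = 0 \<and>
              (\<forall>\<beta>. ip n (dirder n \<beta> (PSI n l k e)) (xi n q) = 0) \<and>
              cmod (ip n (PSI n l k e) (xi n q)) =
                (if \<forall>j<n. e j = 0 then 2 powr (- (real n * real l) / 2) else 0)) \<and>
          ((\<exists>j<n. q j \<noteq> 0) \<and> \<not> zero_v n q \<subseteq> zero_v n e \<longrightarrow>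
              gip n (PSI n l k e) (xi n q) = 0 \<and>
              (\<forall>\<beta>. ip n (dirder n \<beta> (PSI n l k e)) (xi n q) = 0) \<and>
              ip n (PSI n l k e) (xi n q) = 0))
        \<and>
        (\<exists>c>0. \<forall>n l0 l k e q \<gamma>. 1 < n \<and> 2 \<le> l0 \<and> l0 \<le> l \<and>
            (\<forall>j<n. 0 \<le> k j \<and> k j < 2 ^ l) \<and> (\<forall>j<n. e j \<in> {0, 1}) \<and>
            (\<exists>j<n. q j \<noteq> 0) \<and> zero_v n q \<subseteq> zero_v n e \<and>
            (\<forall>j\<in>supp_v n q. 0 \<le> \<gamma> j \<and> \<gamma> j \<le> 2) \<longrightarrow>
          cmod (gip n (PSI n l k e) (xi n q))
            \<le> c ^ n * bnd n l q \<gamma> * (\<Sum>j<n. (real_of_int (q j))\<^sup>2) \<and>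
          (\<forall>\<beta>. cmod (ip n (dirder n \<beta> (PSI n l k e)) (xi n q))
            \<le> c ^ n * bnd n l q \<gamma> * sqrt (\<Sum>j<n. (\<beta> j)\<^sup>2) * sqrt (\<Sum>j<n. (real_of_int (q j))\<^sup>2)) \<and>
          cmod (ip n (PSI n l k e) (xi n q)) \<le> c ^ n * bnd n l q \<gamma>)"
proof (intro conjI allI impI exI[of _ "128 :: real"])
  fix n l0 l :: nat and k :: "nat \<Rightarrow> int" and e :: "nat \<Rightarrow> nat" and q :: "nat \<Rightarrow> int"
  assume "1 < n \<and> 2 \<le> l0 \<and> l0 \<le> l \<and> (\<forall>j<n. 0 \<le> k j \<and> k j < 2 ^ l) \<and> (\<forall>j<n. e j \<in> {0, 1})"
  then have k: "\<forall>j<n. 0 \<le> k j \<and> k j < 2 ^ l"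
    by blast
  show "gip n (PSI n l k e) (xi n q) = 0" "ip n (dirder n \<beta> (PSI n l k e)) (xi n q) = 0"
    "cmod (ip n (PSI n l k e) (xi n q)) = (if \<forall>j<n. e j = 0 then 2 powr (- (real n * real l) / 2) else 0)"
    if "\<forall>j<n. q j = 0" for \<beta>
    using PSI_xi_zero_frequency[OF k that] by simp_all
  show "gip n (PSI n l k e) (xi n q) = 0" "ip n (dirder n \<beta> (PSI n l k e)) (xi n q) = 0"
    "ip n (PSI n l k e) (xi n q) = 0"
    if "(\<exists>j<n. q j \<noteq> 0) \<and> \<not> zero_v n q \<subseteq> zero_v n e" for \<beta>
    using PSI_xi_vanish[OF k] that by simp_all
next
  fix n l0 l :: nat and k :: "nat \<Rightarrow> int" and e :: "nat \<Rightarrow> nat" and q :: "nat \<Rightarrow> int" and \<gamma> :: "nat \<Rightarrow> real"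
  assume "1 < n \<and> 2 \<le> l0 \<and> l0 \<le> l \<and> (\<forall>j<n. 0 \<le> k j \<and> k j < 2 ^ l) \<and> (\<forall>j<n. e j \<in> {0, 1}) \<and>
    (\<exists>j<n. q j \<noteq> 0) \<and> zero_v n q \<subseteq> zero_v n e \<and> (\<forall>j\<in>supp_v n q. 0 \<le> \<gamma> j \<and> \<gamma> j \<le> 2)"
  then show "cmod (gip n (PSI n l k e) (xi n q)) \<le> 128 ^ n * bnd n l q \<gamma> * (\<Sum>j<n. (real_of_int (q j))\<^sup>2)"
    "cmod (ip n (dirder n \<beta> (PSI n l k e)) (xi n q))
       \<le> 128 ^ n * bnd n l q \<gamma> * sqrt (\<Sum>j<n. (\<beta> j)\<^sup>2) * sqrt (\<Sum>j<n. (real_of_int (q j))\<^sup>2)"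
    "cmod (ip n (PSI n l k e) (xi n q)) \<le> 128 ^ n * bnd n l q \<gamma>" for \<beta>
    using PSI_xi_bounds_uniform[of n k l q e \<gamma>] by auto
qed (simp)

end
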